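(* Let $\alpha\in(1,2)$ and let $p\ge2$, $n\ge1$ be integers. Then the matrix $R_n^{p,\alpha}:=n^{-\alpha}A_n^{p,\alpha}-T_n^{p,\alpha}$ has rank at most $4(p-1)$.
   Context: Knots: $\xi_1=\dots=\xi_{p+1}=0$, $\xi_{i+p+1}=i/n$ ($i=0,\dots,n$), $\xi_{p+n+1}=\dots=\xi_{2p+n+1}=1$. B-splines: $N^0_i=\mathbf 1_{[\xi_i,\xi_{i+1})}$, $N^k_i(x)=\frac{x-\xi_i}{\xi_{i+k}-\xi_i}N^{k-1}_i(x)+\frac{\xi_{i+k+1}-x}{\xi_{i+k+1}-\xi_{i+1}}N^{k-1}_{i+1}(x)$ (zero-denominator fractions are zero). Greville abscissae $\eta_i=\frac{\xi_{i+1}+\dots+\xi_{i+p}}{p}$. On $[0,1]$: $D^\alpha_{0,x}u(x)=\frac{1}{\Gamma(2-\alpha)}\frac{d^2}{dx^2}\int_0^x(x-y)^{1-\alpha}u(y)dy$, $D^\alpha_{x,1}u(x)=\frac{1}{\Gamma(2-\alpha)}\frac{d^2}{dx^2}\int_x^1(y-x)^{1-\alpha}u(y)dy$. $A_n^{p,\alpha}=\frac{1}{2\cos(\pi\alpha/2)}(A_n^L+A_n^R)$ with $(A_n^L)_{i,j}=D^\alpha_{0,x}N^p_{j+1}(\eta_{i+1})$, $(A_n^R)_{i,j}=D^\alpha_{x,1}N^p_{j+1}(\eta_{i+1})$, $i,j=1,\dots,n+p-2$. The cardinal B-spline $\phi_p$: $\phi_0=\mathbf 1_{[0,1)}$, $\phi_p(t)=\frac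 tp\phi_{p-1}(t)+\frac{p+1-t}{p}\phi_{p-1}(t-1)$. On $\mathbb R$: $D^{\alpha}_{-\infty,x}u(x)=\frac{1}{\Gamma(2-\alpha)}\frac{d^2}{dx^2}\int_{-\infty}^x (x-y)^{1-\alpha}u(y)dy$, $D^{\alpha}_{x,+\infty}u(x)=\frac{1}{\Gamma(2-\alpha)}\frac{d^2}{dx^2}\int_x^{+\infty}(y-x)^{1-\alpha}u(y)dy$. $T_n^{p,\alpha}$ is the $(n+p-2)\times(n+p-2)$ matrix with $(i,j)$ entry $\frac{1}{2\cos(\pi\alpha/2)}\big(D^{\alpha}_{-\infty,x}\phi_p(\frac{p+1}{2}+i-j)+D^{\alpha}_{x,+\infty}\phi_p(\frac{p+1}{2}+i-j)\big)$. *)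

theory Defs
  imports "HOL-Analysis.Analysis" "Jordan_Normal_Form.DL_Rank"
begin

text \<open>Open uniform knot vector with p+1 repeated end knots, indices 1..2p+n+1.\<close>
definition knot :: "nat \<Rightarrow> nat \<Rightarrow> nat \<Rightarrow> real" where
  "knot p n k = (if k \<le> p + 1 then 0
                 else if k \<ge> p + n + 1 then 1
                 else real (k - (p + 1)) / real n)"

definition frac0 :: "real \<Rightarrow> real \<Rightarrow> real" where
  "frac0 a b = (if b = 0 then 0 else a / b)"

fun bspline :: "nat \<Rightarrow> nat \<Rightarrow> nat \<Rightarrow> nat \<Rightarrow> real \<Rightarrow> real" where
  "bspline p n 0 i x = (if knot p n i \<le> x \<and> x < knot p n (i + 1) then 1 else 0)"
| "bspline p n (Suc k) i x =
     frac0 (x - knot p n i) (knot p n (i + Suc k) - knot p n i) * bspline p n k i x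
   + frac0 (knot p n (i + Suc k + 1) - x) (knot p n (i + Suc k + 1) - knot p n (i + 1))
       * bspline p n k (i + 1) x"

definition greville :: "nat \<Rightarrow> nat \<Rightarrow> nat \<Rightarrow> real" where
  "greville p n i = (\<Sum>k = i + 1..i + p. knot p n k) / real p"

definition frac_deriv_left01 :: "real \<Rightarrow> (real \<Rightarrow> real) \<Rightarrow> real \<Rightarrow> real" where
  "frac_deriv_left01 \<alpha> u x = (1 / Gamma (2 - \<alpha>)) *
     deriv (deriv (\<lambda>t. integral {0..t} (\<lambda>y. (t - y) powr (1 - \<alpha>) * u y))) x"

definition frac_deriv_right01 :: "real \<Rightarrow> (real \<Rightarrow> real) \<Rightarrow> real \<Rightarrow> real" where
  "frac_deriv_right01 \<alpha> u x = (1 / Gamma (2 - \<alpha>)) *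
     deriv (deriv (\<lambda>t. integral {t..1} (\<lambda>y. (y - t) powr (1 - \<alpha>) * u y))) x"

definition frac_deriv_left_R :: "real \<Rightarrow> (real \<Rightarrow> real) \<Rightarrow> real \<Rightarrow> real" where
  "frac_deriv_left_R \<alpha> u x = (1 / Gamma (2 - \<alpha>)) *
     deriv (deriv (\<lambda>t. integral {..t} (\<lambda>y. (t - y) powr (1 - \<alpha>) * u y))) x"

definition frac_deriv_right_R :: "real \<Rightarrow> (real \<Rightarrow> real) \<Rightarrow> real \<Rightarrow> real" where
  "frac_deriv_right_R \<alpha> u x = (1 / Gamma (2 - \<alpha>)) *
     deriv (deriv (\<lambda>t. integral {t..} (\<lambda>y. (y - t) powr (1 - \<alpha>) * u y))) x"

fun cardinal_bspline :: "nat \<Rightarrow> real \<Rightarrow> real" where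
  "cardinal_bspline 0 t = (if 0 \<le> t \<and> t < 1 then 1 else 0)"
| "cardinal_bspline (Suc p) t =
     t / real (Suc p) * cardinal_bspline p t
   + (real (Suc p) + 1 - t) / real (Suc p) * cardinal_bspline p (t - 1)"

text \<open>The matrices, of size (n+p-2) x (n+p-2); JNF matrices are 0-indexed, so the
  paper's entry (i,j) is stored at position (i-1,j-1).\<close>
definition A_mat :: "nat \<Rightarrow> real \<Rightarrow> nat \<Rightarrow> real Matrix.mat" where
  "A_mat p \<alpha> n = Matrix.mat (n + p - 2) (n + p - 2) (\<lambda>(i, j).
     1 / (2 * cos (pi * \<alpha> / 2)) *
       (frac_deriv_left01 \<alpha> (bspline p n p (j + 2)) (greville p n (i + 2))
      + frac_deriv_right01 \<alpha> (bspline p n p (j + 2)) (greville p n (i + 2))))"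

definition T_mat :: "nat \<Rightarrow> real \<Rightarrow> nat \<Rightarrow> real Matrix.mat" where
  "T_mat p \<alpha> n = Matrix.mat (n + p - 2) (n + p - 2) (\<lambda>(i, j).
     1 / (2 * cos (pi * \<alpha> / 2)) *
       (frac_deriv_left_R \<alpha> (cardinal_bspline p) ((real p + 1) / 2 + real i - real j)
      + frac_deriv_right_R \<alpha> (cardinal_bspline p) ((real p + 1) / 2 + real i - real j)))"

definition R_mat :: "nat \<Rightarrow> real \<Rightarrow> nat \<Rightarrow> real Matrix.mat" where
  "R_mat p \<alpha> n = (real n powr (- \<alpha>)) \<cdot>\<^sub>m A_mat p \<alpha> n - T_mat p \<alpha> n"

end

(*
  For an interior row i and column j the B-spline N^p_(j+2) lies on the uniform part of the
  knot vector, where it is the cardinal B-spline phi_p(n x - s) with s = j + 1 - p, supported in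
  [0,1]. There the fractional derivatives on [0,1] coincide with those on the real line, and the
  substitution x -> n x turns them into n^alpha times the derivatives of phi_p at n x - s; at the
  Greville abscissa this point is (p+1)/2 + i - j, so the (i,j) entries of n^(-alpha) A and T
  agree. Hence R vanishes outside 2(p-1) rows and 2(p-1) columns, and a matrix supported on
  r rows and c columns has rank at most r + c.

  The derivatives are computed in closed form: phi_p is a combination of truncated powers
  (t - k)_+^p, each of which a Beta integral maps to a multiple of (t - k)_+^(p+1-alpha); this
  also supplies the differentiability that the definition via deriv requires.
*)
theory Submission
  imports Defs
begin

subsection \<open>Truncated powers\<close>

definition trunc_powr :: "real \<Rightarrow> real \<Rightarrow> real" where
  "trunc_powr r x = (if 0 < x then x powr r else 0)"

lemma trunc_powr_tendsto_0:
  assumes "r > 0"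
  shows "(trunc_powr r \<longlongrightarrow> 0) (at 0)"
proof (rule Lim_null_comparison)
  show "\<forall>\<^sub>F x in at 0. norm (trunc_powr r x) \<le> \<bar>x\<bar> powr r"
    by (auto simp: trunc_powr_def)
  show "((\<lambda>x. \<bar>x\<bar> powr r) \<longlongrightarrow> 0) (at (0::real))"
    by (rule tendsto_zero_powrI) (auto intro!: tendsto_eq_intros simp: assms)
qed

lemma has_real_derivative_trunc_powr:
  assumes "r > 1"
  shows "(trunc_powr r has_real_derivative r * trunc_powr (r - 1) x) (at x)"
proof -
  consider "x > 0" | "x < 0" | "x = 0" by linarith
  then show ?thesis
  proof cases
    case 1
    have "eventually (\<lambda>y. trunc_powr r y = y powr r) (nhds x)"
      using eventually_nhds_in_open[of "{0<..}" x] 1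
      by (auto elim!: eventually_mono simp: trunc_powr_def)
    then show ?thesis
      by (subst DERIV_cong_ev[OF refl _ refl])
         (use 1 has_real_derivative_powr in \<open>auto simp: trunc_powr_def\<close>)
  next
    case 2
    have "eventually (\<lambda>y. trunc_powr r y = 0) (nhds x)"
      using eventually_nhds_in_open[of "{..<0}" x] 2
      by (auto elim!: eventually_mono simp: trunc_powr_def)
    then show ?thesis
      by (subst DERIV_cong_ev[OF refl _ refl]) (use 2 in \<open>auto simp: trunc_powr_def\<close>)
  next
    case 3
    have "eventually (\<lambda>y. (trunc_powr r y - trunc_powr r 0) / (y - 0) = trunc_powr (r - 1) y) (at 0)"
      unfolding eventually_at_filter by (auto simp: trunc_powr_def powr_diff)
    with trunc_powr_tendsto_0[of "r - 1"] assms
    have "((\<lambda>y. (trunc_powr r y - trunc_powr r 0) / (y - 0)) \<longlongrightarrow> 0) (at 0)"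
      by (simp add: tendsto_cong)
    then show ?thesis
      using 3 by (simp add: has_field_derivative_iff trunc_powr_def)
  qed
qed

lemma trunc_powr_mult_pos: "n > 0 \<Longrightarrow> trunc_powr r (n * x) = n powr r * trunc_powr r x"
  by (auto simp: trunc_powr_def powr_mult zero_less_mult_iff)

text \<open>The truncated power with natural exponent takes the value \<open>0 ^ 0 = 1\<close> at the origin;
  this makes the representation of \<open>\<phi>\<^sub>0 = 1\<^bsub>[0,1)\<^esub>\<close> below exact.\<close>

definition trunc_power :: "nat \<Rightarrow> real \<Rightarrow> real" where
  "trunc_power p x = (if 0 \<le> x then x ^ p else 0)"

lemma trunc_power_eq_trunc_powr: "p \<ge> 1 \<Longrightarrow> trunc_power p x = trunc_powr (real p) x"
  by (auto simp: trunc_power_def trunc_powr_def powr_realpow)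

lemma mult_trunc_power: "x * trunc_power p x = trunc_power (Suc p) x"
  by (simp add: trunc_power_def)

subsection \<open>Cardinal B-splines as sums of truncated powers\<close>

definition bspline_coeff :: "nat \<Rightarrow> nat \<Rightarrow> real" where
  "bspline_coeff p k = (-1) ^ k * real (Suc p choose k) / fact p"

lemma bspline_coeff_eq_0: "k > Suc p \<Longrightarrow> bspline_coeff p k = 0"
  by (simp add: bspline_coeff_def)

lemma bspline_coeff_Suc_mult:
  "bspline_coeff p (Suc k) * real (Suc k) = - bspline_coeff p k * (real p + 1 - real k)"
proof (cases "k \<le> Suc p")
  case True
  have "Suc k * (Suc p choose Suc k) = (Suc p - k) * (Suc p choose k)"
    using Suc_times_binomial binomial_absorb_comp[of "Suc p" k] by simp
  then have "real (Suc k) * real (Suc p choose Suc k) = real (Suc p - k) * real (Suc p choose k)"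
    by (metis of_nat_mult)
  then have "(-1) ^ k * (real (Suc k) * real (Suc p choose Suc k))
      = (-1) ^ k * ((real p + 1 - real k) * real (Suc p choose k))"
    using True by (simp add: of_nat_diff)
  then show ?thesis
    unfolding bspline_coeff_def power_Suc
    by (simp del: binomial_Suc_Suc of_nat_Suc add: field_simps)
qed (simp add: bspline_coeff_eq_0)

lemma bspline_coeff_Suc_Suc:
  "bspline_coeff (Suc p) (Suc k) = (bspline_coeff p (Suc k) - bspline_coeff p k) / (real p + 1)"
proof -
  have "real (Suc (Suc p) choose Suc k) = real (Suc p choose k) + real (Suc p choose Suc k)"
    by (simp only: binomial_Suc_Suc of_nat_add)
  then show ?thesis
    unfolding bspline_coeff_def power_Suc fact_Suc by (simp del: binomial_Suc_Suc add: field_simps)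
qed

lemma sum_bspline_coeff_telescope:
  "(\<Sum>k\<le>Suc p. bspline_coeff p k * real k * f k)
   + (\<Sum>k\<le>Suc p. bspline_coeff p k * (real p + 1 - real k) * f (Suc k)) = 0"
proof -
  have "(\<Sum>k\<le>Suc p. bspline_coeff p k * real k * f k)
      = (\<Sum>k\<le>p. bspline_coeff p (Suc k) * real (Suc k) * f (Suc k))"
    by (subst sum.atMost_Suc_shift) simp
  also have "\<dots> = - (\<Sum>k\<le>p. bspline_coeff p k * (real p + 1 - real k) * f (Suc k))"
    by (simp only: bspline_coeff_Suc_mult mult_minus_left sum_negf)
  finally show ?thesis by simp
qed

lemma sum_bspline_coeff_Suc:
  "(real p + 1) * (\<Sum>k\<le>Suc (Suc p). bspline_coeff (Suc p) k * f k)
   = (\<Sum>k\<le>Suc p. bspline_coeff p k * f k) - (\<Sum>k\<le>Suc p. bspline_coeff p k * f (Suc k))"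
proof -
  have "(real p + 1) * bspline_coeff (Suc p) 0 = bspline_coeff p 0"
    by (simp add: bspline_coeff_def divide_simps)
  moreover have "(real p + 1) * bspline_coeff (Suc p) (Suc k) = bspline_coeff p (Suc k) - bspline_coeff p k"
    for k by (simp add: bspline_coeff_Suc_Suc)
  ultimately have "(real p + 1) * (\<Sum>k\<le>Suc (Suc p). bspline_coeff (Suc p) k * f k)
      = bspline_coeff p 0 * f 0 + (\<Sum>k\<le>Suc p. bspline_coeff p (Suc k) * f (Suc k))
        - (\<Sum>k\<le>Suc p. bspline_coeff p k * f (Suc k))"
    by (subst sum.atMost_Suc_shift)
       (simp add: sum_distrib_left distrib_left mult.assoc[symmetric] left_diff_distrib sum_subtractf
             del: sum.atMost_Suc)
  also have "bspline_coeff p 0 * f 0 + (\<Sum>k\<le>Suc p. bspline_coeff p (Suc k) * f (Suc k))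
      = (\<Sum>k\<le>Suc p. bspline_coeff p k * f k)"
    by (subst (2) sum.atMost_Suc_shift) (simp add: bspline_coeff_eq_0)
  finally show ?thesis .
qed

lemma cardinal_bspline_eq_sum_trunc_power:
  "cardinal_bspline p t = (\<Sum>k\<le>Suc p. bspline_coeff p k * trunc_power p (t - real k))"
proof (induction p arbitrary: t)
  case 0
  then show ?case by (simp add: bspline_coeff_def trunc_power_def)
next
  case (Suc p)
  define P where "P k = trunc_power p (t - real k)" for k
  define Q where "Q k = trunc_power (Suc p) (t - real k)" for k
  have shift_left: "t * P k = Q k + real k * P k" for k
    using mult_trunc_power[of "t - real k" p] unfolding P_def Q_def by (simp add: algebra_simps)
  have shift_right: "(real p + 2 - t) * P (Suc k) = (real p + 1 - real k) * P (Suc k) - Q (Suc k)" for k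
    using mult_trunc_power[of "t - real (Suc k)" p] unfolding P_def Q_def by (simp add: algebra_simps)
  have IH: "cardinal_bspline p t = (\<Sum>k\<le>Suc p. bspline_coeff p k * P k)"
    "cardinal_bspline p (t - 1) = (\<Sum>k\<le>Suc p. bspline_coeff p k * P (Suc k))"
    using Suc.IH[of t] Suc.IH[of "t - 1"] unfolding P_def by (simp_all add: algebra_simps)
  have "(real p + 1) * cardinal_bspline (Suc p) t
      = t * cardinal_bspline p t + (real p + 2 - t) * cardinal_bspline p (t - 1)"
    by (simp add: divide_simps) (simp add: algebra_simps)
  also have "\<dots> = (\<Sum>k\<le>Suc p. bspline_coeff p k * (t * P k))
      + (\<Sum>k\<le>Suc p. bspline_coeff p k * ((real p + 2 - t) * P (Suc k)))"
    unfolding IH by (simp add: sum_distrib_left algebra_simps)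
  also have "\<dots> = (\<Sum>k\<le>Suc p. bspline_coeff p k * Q k) - (\<Sum>k\<le>Suc p. bspline_coeff p k * Q (Suc k))
        + ((\<Sum>k\<le>Suc p. bspline_coeff p k * real k * P k)
           + (\<Sum>k\<le>Suc p. bspline_coeff p k * (real p + 1 - real k) * P (Suc k)))"
    unfolding shift_left shift_right by (simp add: algebra_simps sum.distrib sum_subtractf)
  also have "\<dots> = (real p + 1) * (\<Sum>k\<le>Suc (Suc p). bspline_coeff (Suc p) k * Q k)"
    unfolding sum_bspline_coeff_telescope sum_bspline_coeff_Suc by simp
  finally show ?case
    unfolding Q_def by (smt (verit) mult_cancel_left of_nat_0_le_iff)
qed

lemma cardinal_bspline_eq_0: "t < 0 \<or> t \<ge> real p + 1 \<Longrightarrow> cardinal_bspline p t = 0"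
proof (induction p arbitrary: t)
  case (Suc p)
  then show ?case using Suc.IH[of "t - 1"] by auto
qed auto

lemma cardinal_bspline_reflect: "p \<ge> 1 \<Longrightarrow> cardinal_bspline p (real p + 1 - t) = cardinal_bspline p t"
proof (induction p arbitrary: t rule: nat_induct_at_least)
  case base
  then show ?case by (auto simp: field_simps)
next
  case (Suc p)
  have "cardinal_bspline p (real (Suc p) + 1 - t) = cardinal_bspline p (t - 1)"
    using Suc.IH[of "t - 1"] by (simp add: algebra_simps)
  moreover have "cardinal_bspline p (real (Suc p) + 1 - t - 1) = cardinal_bspline p t"
    using Suc.IH[of t] by (simp add: algebra_simps)
  ultimately show ?case
    by (simp only: cardinal_bspline.simps) (simp add: field_simps)
qed

text \<open>For \<open>r = p\<close> this is \<open>\<phi>\<^sub>p\<close> itself; for other exponents it is, up to a Beta factor,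
  a Riemann-Liouville integral or derivative of \<open>\<phi>\<^sub>p\<close>.\<close>

definition cardinal_bspline_powr :: "nat \<Rightarrow> real \<Rightarrow> real \<Rightarrow> real" where
  "cardinal_bspline_powr p r u = (\<Sum>k\<le>Suc p. bspline_coeff p k * trunc_powr r (u - real k))"

lemma cardinal_bspline_eq_powr:
  "p \<ge> 1 \<Longrightarrow> cardinal_bspline p t = cardinal_bspline_powr p (real p) t"
  by (simp add: cardinal_bspline_eq_sum_trunc_power trunc_power_eq_trunc_powr cardinal_bspline_powr_def)

lemma has_real_derivative_cardinal_bspline_powr:
  assumes "r > 1"
  shows "(cardinal_bspline_powr p r has_real_derivative r * cardinal_bspline_powr p (r - 1) u) (at u)"
proof -
  have "((\<lambda>u. bspline_coeff p k * trunc_powr r (u - real k)) has_real_derivative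
          r * (bspline_coeff p k * trunc_powr (r - 1) (u - real k))) (at u)" for k
    using DERIV_cmult[OF DERIV_chain2[OF has_real_derivative_trunc_powr[OF assms]
          DERIV_diff[OF DERIV_ident DERIV_const]], of "bspline_coeff p k"]
    by (simp add: mult_ac)
  then show ?thesis
    unfolding cardinal_bspline_powr_def sum_distrib_left by (rule DERIV_sum)
qed

subsection \<open>Riemann-Liouville integrals of cardinal B-splines\<close>

lemma has_integral_Beta_interval:
  fixes a b L k :: real
  assumes "a > -1" "b > -1" "L > 0"
  shows "((\<lambda>y. (y - k) powr a * (k + L - y) powr b) has_integral Beta (a+1) (b+1) * L powr (a+b+1))
           {k..k+L}"
proof -
  define h where "h = (\<lambda>t::real. t powr a * (1 - t) powr b)"
  have "(h has_integral Beta (a+1) (b+1)) (cbox 0 1)"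
    using has_integral_Beta_real[of "a+1" "b+1"] assms by (simp add: h_def)
  moreover have "(0 - - k / L) /\<^sub>R (1 / L) = k" "(1 - - k / L) /\<^sub>R (1 / L) = k + L"
    using assms by (simp_all add: field_simps)
  ultimately have "((\<lambda>y. h (y / L - k / L)) has_integral L * Beta (a+1) (b+1)) {k..k+L}"
    using has_integral_affinity'[of h _ 0 1 "1 / L" "- k / L"] assms by simp
  from has_integral_mult_left[OF this, of "L powr (a+b)"]
  have "((\<lambda>y. h (y / L - k / L) * L powr (a+b)) has_integral Beta (a+1) (b+1) * L powr (a+b+1))
          {k..k+L}"
    using assms by (simp add: powr_add mult_ac)
  then show ?thesis
  proof (rule has_integral_eq[rotated])
    fix y assume y: "y \<in> {k..k+L}"
    have "y / L - k / L = (y - k) / L" "1 - (y - k) / L = (k + L - y) / L"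
      using assms by (simp_all add: field_simps)
    then show "h (y / L - k / L) * L powr (a+b) = (y - k) powr a * (k + L - y) powr b"
      using y assms by (simp add: h_def powr_divide powr_add field_simps)
  qed
qed

lemma has_integral_trunc_powr_left:
  assumes "a > 0" "\<beta> > -1"
  shows "((\<lambda>y. (t - y) powr \<beta> * trunc_powr a (y - K)) has_integral
           Beta (a+1) (\<beta>+1) * trunc_powr (a+1+\<beta>) (t - K)) {..t}"
proof (cases "K < t")
  case True
  have "((\<lambda>y. (y - K) powr a * (t - y) powr \<beta>) has_integral
          Beta (a+1) (\<beta>+1) * trunc_powr (a+1+\<beta>) (t - K)) {K..t}"
    using has_integral_Beta_interval[of a \<beta> "t - K" K] assms True
    by (simp add: trunc_powr_def add_ac)
  then have "((\<lambda>y. if y \<in> {K..t} then (y - K) powr a * (t - y) powr \<beta> else 0) has_integral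
          Beta (a+1) (\<beta>+1) * trunc_powr (a+1+\<beta>) (t - K)) {..t}"
    by (subst has_integral_restrict) auto
  then show ?thesis
    by (rule has_integral_eq[rotated]) (auto simp: trunc_powr_def)
next
  case False
  then have "((\<lambda>y. (t - y) powr \<beta> * trunc_powr a (y - K)) has_integral 0) {..t}"
    by (intro has_integral_is_0) (auto simp: trunc_powr_def)
  with False show ?thesis
    by (simp add: trunc_powr_def)
qed

lemma has_integral_trunc_powr_left_scaled:
  assumes "a > 0" "\<beta> > -1" "n > 0"
  shows "((\<lambda>y. (t - y) powr \<beta> * trunc_powr a (n * y - K)) has_integral
           n powr (-1-\<beta>) * Beta (a+1) (\<beta>+1) * trunc_powr (a+1+\<beta>) (n * t - K)) {..t}"
proof -
  have scale: "n * x - K = n * (x - K / n)" for x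
    using assms(3) by (simp add: field_simps)
  have "((\<lambda>y. n powr a * ((t - y) powr \<beta> * trunc_powr a (y - K / n))) has_integral
          n powr a * (Beta (a+1) (\<beta>+1) * trunc_powr (a+1+\<beta>) (t - K / n))) {..t}"
    by (intro has_integral_mult_right has_integral_trunc_powr_left assms)
  moreover have "n powr a * ((t - y) powr \<beta> * trunc_powr a (y - K / n))
      = (t - y) powr \<beta> * trunc_powr a (n * y - K)" for y
    unfolding scale trunc_powr_mult_pos[OF assms(3)] by (simp only: mult_ac)
  moreover have "n powr a * (Beta (a+1) (\<beta>+1) * trunc_powr (a+1+\<beta>) (t - K / n))
      = n powr (-1-\<beta>) * Beta (a+1) (\<beta>+1) * trunc_powr (a+1+\<beta>) (n * t - K)"
    unfolding scale trunc_powr_mult_pos[OF assms(3)]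
    by (simp add: powr_add[symmetric] mult_ac)
  ultimately show ?thesis
    by simp
qed

lemma has_integral_reflect_UNIV:
  fixes f :: "real \<Rightarrow> 'a::euclidean_space"
  assumes "(f has_integral i) UNIV"
  shows "((\<lambda>x. f (- x)) has_integral i) UNIV"
  unfolding has_integral_alt'
proof (intro conjI allI impI)
  fix a b :: real
  have "f integrable_on {-b..-a}"
    using assms by (simp add: has_integral_alt')
  then show "(\<lambda>x. if x \<in> UNIV then f (- x) else 0) integrable_on cbox a b"
    using integrable_reflect[where f=f and a="-b" and b="-a"] by simp
next
  fix e :: real assume "e > 0"
  then obtain B where "B > 0"
    and B: "\<And>a b. ball 0 B \<subseteq> cbox a b \<Longrightarrow> norm (integral (cbox a b) f - i) < e"
    using assms unfolding has_integral_alt' by force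
  have "ball 0 B \<subseteq> {-b..-a}" if "ball 0 B \<subseteq> {a..b}" for a b :: real
  proof
    fix x :: real assume "x \<in> ball 0 B"
    then have "- x \<in> {a..b}" using that by (auto simp: subset_iff)
    then show "x \<in> {-b..-a}" by auto
  qed
  then have "norm (integral {a..b} (\<lambda>x. f (- x)) - i) < e" if "ball 0 B \<subseteq> {a..b}" for a b
    using B[of "-b" "-a"] integral_reflect[of "-a" "-b" f] that by simp
  with \<open>B > 0\<close>
  show "\<exists>B>0. \<forall>a b. ball 0 B \<subseteq> cbox a b \<longrightarrow>
          norm (integral (cbox a b) (\<lambda>x. if x \<in> UNIV then f (- x) else 0) - i) < e"
    by auto
qed

lemma has_integral_reflect_real_set:
  fixes f :: "real \<Rightarrow> 'a::euclidean_space"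
  assumes "(f has_integral i) S"
  shows "((\<lambda>x. f (- x)) has_integral i) (uminus ` S)"
proof -
  have "(\<lambda>x. if x \<in> uminus ` S then f (- x) else 0) = (\<lambda>x. if - x \<in> S then f (- x) else 0)"
    by (force simp: image_iff)
  moreover have "((\<lambda>x. if - x \<in> S then f (- x) else 0) has_integral i) UNIV"
    using has_integral_reflect_UNIV[of "\<lambda>x. if x \<in> S then f x else 0"] assms
    by (simp add: has_integral_restrict_UNIV)
  ultimately show ?thesis
    using has_integral_restrict_UNIV[of "uminus ` S" "\<lambda>x. f (- x)" i] by simp
qed

lemma has_integral_cardinal_bspline_left:
  assumes "p \<ge> 1" "\<beta> > -1" "n > 0"
  shows "((\<lambda>y. (t - y) powr \<beta> * cardinal_bspline p (n * y - s)) has_integral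
           n powr (-1-\<beta>) * Beta (real p + 1) (\<beta> + 1) *
           cardinal_bspline_powr p (real p + 1 + \<beta>) (n * t - s)) {..t}"
proof -
  have "((\<lambda>y. \<Sum>k\<le>Suc p. bspline_coeff p k *
            ((t - y) powr \<beta> * trunc_powr (real p) (n * y - (s + real k)))) has_integral
         (\<Sum>k\<le>Suc p. bspline_coeff p k * (n powr (-1-\<beta>) * Beta (real p + 1) (\<beta> + 1) *
            trunc_powr (real p + 1 + \<beta>) (n * t - (s + real k))))) {..t}"
    using assms by (intro has_integral_sum has_integral_mult_right has_integral_trunc_powr_left_scaled) auto
  moreover have "(t - y) powr \<beta> * cardinal_bspline p (n * y - s) = (\<Sum>k\<le>Suc p. bspline_coeff p k *
            ((t - y) powr \<beta> * trunc_powr (real p) (n * y - (s + real k))))" for y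
    using assms(1)
    by (simp add: cardinal_bspline_eq_powr cardinal_bspline_powr_def sum_distrib_left diff_diff_eq
                  distrib_left mult.left_commute)
  ultimately show ?thesis
    by (simp add: cardinal_bspline_powr_def sum_distrib_left distrib_left diff_diff_eq mult.assoc
                  mult.left_commute)
qed

lemma has_integral_cardinal_bspline_right:
  assumes "p \<ge> 1" "\<beta> > -1" "n > 0"
  shows "((\<lambda>y. (y - t) powr \<beta> * cardinal_bspline p (n * y - s)) has_integral
           n powr (-1-\<beta>) * Beta (real p + 1) (\<beta> + 1) *
           cardinal_bspline_powr p (real p + 1 + \<beta>) (real p + 1 - (n * t - s))) {t..}"
proof -
  have "((\<lambda>z. (- t - z) powr \<beta> * cardinal_bspline p (n * z - (- real p - 1 - s))) has_integral
          n powr (-1-\<beta>) * Beta (real p + 1) (\<beta> + 1) *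
          cardinal_bspline_powr p (real p + 1 + \<beta>) (n * - t - (- real p - 1 - s))) {..-t}"
    by (rule has_integral_cardinal_bspline_left[OF assms])
  from has_integral_reflect_real_set[OF this]
  have "((\<lambda>y. (y - t) powr \<beta> * cardinal_bspline p (real p + 1 - (n * y - s))) has_integral
          n powr (-1-\<beta>) * Beta (real p + 1) (\<beta> + 1) *
          cardinal_bspline_powr p (real p + 1 + \<beta>) (real p + 1 - (n * t - s))) {t..}"
    by (simp add: algebra_simps)
  then show ?thesis
    by (simp add: cardinal_bspline_reflect[OF assms(1)])
qed

subsection \<open>Fractional derivatives of cardinal B-splines\<close>

lemma deriv_deriv_affine:
  fixes f f' f'' :: "real \<Rightarrow> real"
  assumes f': "\<And>x. (f has_real_derivative f' x) (at x)"
      and f'': "\<And>x. (f' has_real_derivative f'' x) (at x)"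
  shows "deriv (deriv (\<lambda>t. C * f (m * t + c))) x = C * m * m * f'' (m * x + c)"
proof -
  have affine: "((\<lambda>t. m * t + c) has_real_derivative m) (at t)" for t
    by (auto intro!: derivative_eq_intros)
  have "deriv (\<lambda>t. C * f (m * t + c)) = (\<lambda>t. C * m * f' (m * t + c))"
    using DERIV_imp_deriv[OF DERIV_cmult[OF DERIV_chain2[OF f' affine]]] by (auto simp: mult_ac)
  moreover have "((\<lambda>t. C * m * f' (m * t + c)) has_real_derivative C * m * (f'' (m * x + c) * m)) (at x)"
    by (rule DERIV_cmult, rule DERIV_chain2[OF f'' affine])
  ultimately show ?thesis
    using DERIV_imp_deriv by (simp add: mult_ac)
qed

lemma deriv_deriv_cardinal_bspline_powr_affine:
  assumes "r > 2"
  shows "deriv (deriv (\<lambda>t. C * cardinal_bspline_powr p r (m * t + c))) x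
           = C * m * m * (r * (r - 1) * cardinal_bspline_powr p (r - 2) (m * x + c))"
proof -
  have "((\<lambda>u. r * cardinal_bspline_powr p (r - 1) u) has_real_derivative
          r * ((r - 1) * cardinal_bspline_powr p (r - 1 - 1) u)) (at u)" for u
    using assms by (intro DERIV_cmult has_real_derivative_cardinal_bspline_powr) simp
  from deriv_deriv_affine[OF has_real_derivative_cardinal_bspline_powr this] assms show ?thesis
    by (simp add: diff_diff_eq mult.assoc)
qed

definition cardinal_bspline_frac_deriv :: "nat \<Rightarrow> real \<Rightarrow> real \<Rightarrow> real" where
  "cardinal_bspline_frac_deriv p \<alpha> u =
     Beta (real p + 1) (2 - \<alpha>) / Gamma (2 - \<alpha>) * (real p + 2 - \<alpha>) * (real p + 1 - \<alpha>) *
     cardinal_bspline_powr p (real p - \<alpha>) u"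

lemma frac_deriv_left_R_cardinal_bspline:
  assumes "1 < \<alpha>" "\<alpha> < 2" "p \<ge> 2" "n > 0"
  shows "frac_deriv_left_R \<alpha> (\<lambda>y. cardinal_bspline p (n * y - s)) x
           = n powr \<alpha> * cardinal_bspline_frac_deriv p \<alpha> (n * x - s)"
proof -
  define C where "C = n powr (\<alpha> - 2) * Beta (real p + 1) (2 - \<alpha>)"
  have integral: "(\<lambda>t. integral {..t} (\<lambda>y. (t - y) powr (1 - \<alpha>) * cardinal_bspline p (n * y - s)))
      = (\<lambda>t. C * cardinal_bspline_powr p (real p + 2 - \<alpha>) (n * t + - s))"
    using has_integral_cardinal_bspline_left[of p "1 - \<alpha>" n _ s] assms
    by (auto simp: C_def integral_unique algebra_simps)
  have exponent: "real p + 2 - \<alpha> > 2"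
    using assms by linarith
  have arith: "real p + 2 - \<alpha> - 1 = real p + 1 - \<alpha>" "real p + 2 - \<alpha> - 2 = real p - \<alpha>"
    "n * x + - s = n * x - s"
    by simp_all
  have "C * n * n = n powr \<alpha> * Beta (real p + 1) (2 - \<alpha>)"
    using assms(4) by (simp add: C_def powr_diff power2_eq_square)
  then show ?thesis
    unfolding frac_deriv_left_R_def integral arith
      deriv_deriv_cardinal_bspline_powr_affine[OF exponent]
    by (simp add: cardinal_bspline_frac_deriv_def divide_inverse mult_ac)
qed

lemma frac_deriv_right_R_cardinal_bspline:
  assumes "1 < \<alpha>" "\<alpha> < 2" "p \<ge> 2" "n > 0"
  shows "frac_deriv_right_R \<alpha> (\<lambda>y. cardinal_bspline p (n * y - s)) x
           = n powr \<alpha> * cardinal_bspline_frac_deriv p \<alpha> (real p + 1 - (n * x - s))"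
proof -
  define C where "C = n powr (\<alpha> - 2) * Beta (real p + 1) (2 - \<alpha>)"
  have integral: "(\<lambda>t. integral {t..} (\<lambda>y. (y - t) powr (1 - \<alpha>) * cardinal_bspline p (n * y - s)))
      = (\<lambda>t. C * cardinal_bspline_powr p (real p + 2 - \<alpha>) ((- n) * t + (real p + 1 + s)))"
    using has_integral_cardinal_bspline_right[of p "1 - \<alpha>" n _ s] assms
    by (auto simp: C_def integral_unique algebra_simps)
  have exponent: "real p + 2 - \<alpha> > 2"
    using assms by linarith
  have arith: "real p + 2 - \<alpha> - 1 = real p + 1 - \<alpha>" "real p + 2 - \<alpha> - 2 = real p - \<alpha>"
    "(- n) * x + (real p + 1 + s) = real p + 1 - (n * x - s)"
    by simp_all
  have "C * (- n) * (- n) = n powr \<alpha> * Beta (real p + 1) (2 - \<alpha>)"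
    using assms(4) by (simp add: C_def powr_diff power2_eq_square)
  then show ?thesis
    unfolding frac_deriv_right_R_def integral arith
      deriv_deriv_cardinal_bspline_powr_affine[OF exponent]
    by (simp add: cardinal_bspline_frac_deriv_def divide_inverse mult_ac)
qed

lemma frac_deriv_left01_eq_frac_deriv_left_R:
  assumes "\<And>y. y < 0 \<Longrightarrow> u y = 0"
  shows "frac_deriv_left01 \<alpha> u = frac_deriv_left_R \<alpha> u"
proof -
  have same_integral: "integral {0..t} (\<lambda>y. (t - y) powr (1 - \<alpha>) * u y)
      = integral {..t} (\<lambda>y. (t - y) powr (1 - \<alpha>) * u y)" for t
  proof -
    have "(\<lambda>y. if y \<in> {0..t} then (t - y) powr (1 - \<alpha>) * u y else 0)
        = (\<lambda>y. if y \<in> {..t} then (t - y) powr (1 - \<alpha>) * u y else 0)"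
      by (rule ext) (auto simp: assms)
    then show ?thesis
      using integral_restrict_UNIV[of "{0..t}" "\<lambda>y. (t - y) powr (1 - \<alpha>) * u y"]
        integral_restrict_UNIV[of "{..t}" "\<lambda>y. (t - y) powr (1 - \<alpha>) * u y"] by simp
  qed
  then show ?thesis
    unfolding frac_deriv_left01_def frac_deriv_left_R_def by (simp only: same_integral)
qed

lemma frac_deriv_right01_eq_frac_deriv_right_R:
  assumes "\<And>y. y > 1 \<Longrightarrow> u y = 0"
  shows "frac_deriv_right01 \<alpha> u = frac_deriv_right_R \<alpha> u"
proof -
  have same_integral: "integral {t..1} (\<lambda>y. (y - t) powr (1 - \<alpha>) * u y)
      = integral {t..} (\<lambda>y. (y - t) powr (1 - \<alpha>) * u y)" for t
  proof -
    have "(\<lambda>y. if y \<in> {t..1} then (y - t) powr (1 - \<alpha>) * u y else 0)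
        = (\<lambda>y. if y \<in> {t..} then (y - t) powr (1 - \<alpha>) * u y else 0)"
      by (rule ext) (auto simp: assms)
    then show ?thesis
      using integral_restrict_UNIV[of "{t..1}" "\<lambda>y. (y - t) powr (1 - \<alpha>) * u y"]
        integral_restrict_UNIV[of "{t..}" "\<lambda>y. (y - t) powr (1 - \<alpha>) * u y"] by simp
  qed
  then show ?thesis
    unfolding frac_deriv_right01_def frac_deriv_right_R_def by (simp only: same_integral)
qed

subsection \<open>Rank of a matrix supported on few rows and columns\<close>

lemma rank_le_cols_cover:
  fixes M :: "'a::field mat"
  assumes "M \<in> carrier_mat d nc" "finite J"
    and "\<And>i j. i < d \<Longrightarrow> j < nc \<Longrightarrow> j \<notin> J \<Longrightarrow> M $$ (i, j) = 0"
  shows "vec_space.rank d M \<le> card J"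
  using assms(2,1,3)
proof (induction J arbitrary: M rule: finite_induct)
  case empty
  then have "M = 0\<^sub>m d nc"
    by (intro eq_matI) auto
  then show ?case
    by (simp add: vec_space.rank_0I)
next
  case (insert k J)
  define M' where "M' = mat d nc (\<lambda>(r, c). if c = k then 0 else M $$ (r, c))"
  define E where "E = mat d nc (\<lambda>(r, c). if c = k then M $$ (r, c) else 0)"
  have "M = M' + E"
    using insert.prems(1) by (intro eq_matI) (auto simp: M'_def E_def)
  moreover have "vec_space.rank d (M' + E) \<le> vec_space.rank d M' + vec_space.rank d E"
    by (rule vec_space.rank_subadditive) (auto simp: M'_def E_def)
  moreover have "vec_space.rank d M' \<le> card J"
    by (rule insert.IH) (use insert.prems in \<open>auto simp: M'_def\<close>)
  moreover have "vec_space.rank d E \<le> 1"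
    by (rule vec_space.rank_le_1_product_entries[of E d nc "\<lambda>r. M $$ (r, k)"
          "\<lambda>c. if c = k then 1 else 0"])
       (auto simp: E_def)
  ultimately show ?case
    using insert.hyps by simp
qed

lemma rank_le_rows_cols_cover:
  fixes M :: "'a::field mat"
  assumes "M \<in> carrier_mat d nc" "finite I" "finite J"
    and "\<And>i j. i < d \<Longrightarrow> j < nc \<Longrightarrow> i \<notin> I \<Longrightarrow> j \<notin> J \<Longrightarrow> M $$ (i, j) = 0"
  shows "vec_space.rank d M \<le> card I + card J"
  using assms(2,1,4)
proof (induction I arbitrary: M rule: finite_induct)
  case empty
  then show ?case
    using rank_le_cols_cover[OF empty.prems(1) assms(3)] by simp
next
  case (insert k I)
  define M' where "M' = mat d nc (\<lambda>(r, c). if r = k then 0 else M $$ (r, c))"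
  define E where "E = mat d nc (\<lambda>(r, c). if r = k then M $$ (r, c) else 0)"
  have "M = M' + E"
    using insert.prems(1) by (intro eq_matI) (auto simp: M'_def E_def)
  moreover have "vec_space.rank d (M' + E) \<le> vec_space.rank d M' + vec_space.rank d E"
    by (rule vec_space.rank_subadditive) (auto simp: M'_def E_def)
  moreover have "vec_space.rank d M' \<le> card I + card J"
    by (rule insert.IH) (use insert.prems in \<open>auto simp: M'_def\<close>)
  moreover have "vec_space.rank d E \<le> 1"
    by (rule vec_space.rank_le_1_product_entries[of E d nc "\<lambda>r. if r = k then 1 else 0"
          "\<lambda>c. M $$ (k, c)"])
       (auto simp: E_def)
  ultimately show ?case
    using insert.hyps by simp
qed

subsection \<open>B-splines on the uniform part of the knot vector\<close>

lemma knot_uniform: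
  assumes "n \<ge> 1" "p + 1 \<le> m" "m \<le> p + n + 1"
  shows "knot p n m = (real m - real p - 1) / real n"
  using assms unfolding knot_def by (auto simp: of_nat_diff)

lemma bspline_eq_cardinal_bspline:
  assumes "n \<ge> 1"
  shows "p + 1 \<le> i \<Longrightarrow> i + k + 1 \<le> p + n + 1 \<Longrightarrow>
    bspline p n k i x = cardinal_bspline k (real n * x - (real i - real p - 1))"
proof (induction k arbitrary: i)
  case 0
  then have knots: "knot p n i = (real i - real p - 1) / real n"
    "knot p n (i + 1) = (real i - real p) / real n"
    using knot_uniform[OF assms, of p i] knot_uniform[OF assms, of p "i + 1"] by simp_all
  have "real n > 0"
    using assms by simp
  then have "knot p n i \<le> x \<longleftrightarrow> 0 \<le> real n * x - (real i - real p - 1)"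
    "x < knot p n (i + 1) \<longleftrightarrow> real n * x - (real i - real p - 1) < 1"
    unfolding knots by (simp_all add: field_simps)
  then show ?case
    by simp
next
  case (Suc k)
  define t where "t = real n * x - (real i - real p - 1)"
  have n: "real n > 0"
    using assms by simp
  have knots: "knot p n i = (real i - real p - 1) / real n"
    "knot p n (i + 1) = (real i - real p) / real n"
    "knot p n (i + Suc k) = (real i + real k - real p) / real n"
    "knot p n (i + Suc k + 1) = (real i + real k + 1 - real p) / real n"
    using Suc.prems knot_uniform[OF assms, of p i] knot_uniform[OF assms, of p "i + 1"]
      knot_uniform[OF assms, of p "i + Suc k"] knot_uniform[OF assms, of p "i + Suc k + 1"]
    by simp_all
  have widths: "knot p n (i + Suc k) - knot p n i = (real k + 1) / real n"
    "knot p n (i + Suc k + 1) - knot p n (i + 1) = (real k + 1) / real n"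
    unfolding knots by (simp_all add: diff_divide_distrib[symmetric])
  have "real n * (x - knot p n i) = t" "real n * (knot p n (i + Suc k + 1) - x) = real (Suc k) + 1 - t"
    unfolding knots t_def using n by (simp_all add: field_simps)
  moreover have "frac0 a ((real k + 1) / real n) = real n * a / real (Suc k)" for a
    using n by (simp add: frac0_def field_simps)
  ultimately have "frac0 (x - knot p n i) (knot p n (i + Suc k) - knot p n i) = t / real (Suc k)"
    "frac0 (knot p n (i + Suc k + 1) - x) (knot p n (i + Suc k + 1) - knot p n (i + 1))
       = (real (Suc k) + 1 - t) / real (Suc k)"
    unfolding widths by simp_all
  moreover have "bspline p n k i x = cardinal_bspline k t"
    "bspline p n k (i + 1) x = cardinal_bspline k (t - 1)"
    using Suc.IH[of i] Suc.IH[of "i + 1"] Suc.prems unfolding t_def by (simp_all add: algebra_simps)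
  ultimately show ?case
    unfolding bspline.simps cardinal_bspline.simps t_def[symmetric] by simp
qed

lemma sum_of_nat_interval: "(\<Sum>k = a + 1..a + q. real k) = real q * real a + real q * (real q + 1) / 2"
  by (induction q) (simp_all add: field_simps)

lemma greville_uniform:
  assumes "n \<ge> 1" "p \<ge> 1" "p \<le> i" "i \<le> n + 1"
  shows "real n * greville p n i = real i - real p - 1 + (real p + 1) / 2"
proof -
  have "(\<Sum>k = i + 1..i + p. knot p n k) = (\<Sum>k = i + 1..i + p. (real k - real p - 1) / real n)"
    using assms by (intro sum.cong knot_uniform) auto
  also have "\<dots> = ((\<Sum>k = i + 1..i + p. real k) - real p * (real p + 1)) / real n"
    by (simp add: sum_divide_distrib[symmetric] sum_subtractf algebra_simps)
  finally show ?thesis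
    unfolding greville_def sum_of_nat_interval using assms by (simp add: field_simps)
qed

lemma frac_deriv01_bspline_interior:
  assumes "1 < \<alpha>" "\<alpha> < 2" "p \<ge> 2" "n \<ge> 1" "p \<le> j + 1" "j + 2 \<le> n"
  defines "s \<equiv> real j + 1 - real p"
  shows "frac_deriv_left01 \<alpha> (bspline p n p (j + 2)) x
           = n powr \<alpha> * frac_deriv_left_R \<alpha> (cardinal_bspline p) (real n * x - s)"
    and "frac_deriv_right01 \<alpha> (bspline p n p (j + 2)) x
           = n powr \<alpha> * frac_deriv_right_R \<alpha> (cardinal_bspline p) (real n * x - s)"
proof -
  have n: "real n > 0"
    using assms by simp
  have N: "bspline p n p (j + 2) = (\<lambda>y. cardinal_bspline p (real n * y - s))"
    using bspline_eq_cardinal_bspline[of n p "j + 2" p] assms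
    by (intro ext) (simp add: s_def algebra_simps)
  have support: "cardinal_bspline p (real n * y - s) = 0" if "y < 0 \<or> y > 1" for y
  proof (rule cardinal_bspline_eq_0)
    have "0 \<le> s" "s + real p + 1 \<le> real n"
      using assms by (simp_all add: s_def)
    with that n show "real n * y - s < 0 \<or> real n * y - s \<ge> real p + 1"
      by (smt (verit) mult_le_cancel_left1 mult_pos_neg)
  qed
  have unscaled: "frac_deriv_left_R \<alpha> (cardinal_bspline p) u = cardinal_bspline_frac_deriv p \<alpha> u"
    "frac_deriv_right_R \<alpha> (cardinal_bspline p) u = cardinal_bspline_frac_deriv p \<alpha> (real p + 1 - u)"
    for u
    using frac_deriv_left_R_cardinal_bspline[of \<alpha> p 1 0 u]
      frac_deriv_right_R_cardinal_bspline[of \<alpha> p 1 0 u] assms by simp_all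
  have "frac_deriv_left01 \<alpha> (\<lambda>y. cardinal_bspline p (real n * y - s))
      = frac_deriv_left_R \<alpha> (\<lambda>y. cardinal_bspline p (real n * y - s))"
    "frac_deriv_right01 \<alpha> (\<lambda>y. cardinal_bspline p (real n * y - s))
      = frac_deriv_right_R \<alpha> (\<lambda>y. cardinal_bspline p (real n * y - s))"
    by (simp_all add: frac_deriv_left01_eq_frac_deriv_left_R frac_deriv_right01_eq_frac_deriv_right_R
                      support)
  then show "frac_deriv_left01 \<alpha> (bspline p n p (j + 2)) x
      = n powr \<alpha> * frac_deriv_left_R \<alpha> (cardinal_bspline p) (real n * x - s)"
    and "frac_deriv_right01 \<alpha> (bspline p n p (j + 2)) x
      = n powr \<alpha> * frac_deriv_right_R \<alpha> (cardinal_bspline p) (real n * x - s)"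
    unfolding N unscaled
    using frac_deriv_left_R_cardinal_bspline[OF assms(1-3) n]
      frac_deriv_right_R_cardinal_bspline[OF assms(1-3) n] by simp_all
qed

lemma A_mat_interior_entry:
  assumes "1 < \<alpha>" "\<alpha> < 2" "p \<ge> 2" "n \<ge> 1"
    and "p \<le> i + 2" "i + 1 \<le> n" "p \<le> j + 1" "j + 2 \<le> n"
  shows "A_mat p \<alpha> n $$ (i, j) = n powr \<alpha> * T_mat p \<alpha> n $$ (i, j)"
proof -
  have "real n * greville p n (i + 2) - (real j + 1 - real p) = (real p + 1) / 2 + real i - real j"
    using greville_uniform[of n p "i + 2"] assms by (simp add: field_simps)
  moreover have "i < n + p - 2" "j < n + p - 2"
    using assms by simp_all
  ultimately show ?thesis
    using frac_deriv01_bspline_interior[OF assms(1-4,7,8), of "greville p n (i + 2)"]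
    unfolding A_mat_def T_mat_def by (simp add: algebra_simps)
qed

lemma R_mat_interior_entry:
  assumes "1 < \<alpha>" "\<alpha> < 2" "p \<ge> 2" "n \<ge> 1"
    and "p \<le> i + 2" "i + 1 \<le> n" "p \<le> j + 1" "j + 2 \<le> n"
  shows "R_mat p \<alpha> n $$ (i, j) = 0"
proof -
  have "A_mat p \<alpha> n \<in> carrier_mat (n + p - 2) (n + p - 2)"
    "T_mat p \<alpha> n \<in> carrier_mat (n + p - 2) (n + p - 2)"
    by (simp_all add: A_mat_def T_mat_def)
  moreover have "i < n + p - 2" "j < n + p - 2"
    using assms by simp_all
  ultimately have "R_mat p \<alpha> n $$ (i, j) = n powr - \<alpha> * A_mat p \<alpha> n $$ (i, j) - T_mat p \<alpha> n $$ (i, j)"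
    unfolding R_mat_def by simp
  also have "\<dots> = (n powr - \<alpha> * n powr \<alpha> - 1) * T_mat p \<alpha> n $$ (i, j)"
    unfolding A_mat_interior_entry[OF assms] by (simp add: algebra_simps)
  also have "\<dots> = 0"
    using assms(4) by (simp add: powr_add[symmetric])
  finally show ?thesis .
qed

theorem mainTheorem13:
  fixes \<alpha> :: real and p n :: nat
  assumes "1 < \<alpha>" and "\<alpha> < 2" and "p \<ge> 2" and "n \<ge> 1"
  shows "vec_space.rank (n + p - 2) (R_mat p \<alpha> n) \<le> 4 * (p - 1)"
proof -
  define d where "d = n + p - 2"
  define I where "I = {..<p - 2} \<union> {n..<d}"
  define J where "J = {..<p - 1} \<union> {n - 1..<d}"
  have "R_mat p \<alpha> n \<in> carrier_mat d d"
    unfolding R_mat_def d_def by (rule minus_carrier_mat) (simp add: T_mat_def)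
  then have "vec_space.rank d (R_mat p \<alpha> n) \<le> card I + card J"
    by (rule rank_le_rows_cols_cover)
       (use R_mat_interior_entry[OF assms] in \<open>auto simp: I_def J_def d_def\<close>)
  also have "card I + card J \<le> 4 * (p - 1)"
    using card_Un_le[of "{..<p - 2}" "{n..<d}"] card_Un_le[of "{..<p - 1}" "{n - 1..<d}"] assms
    unfolding I_def J_def d_def by (simp; arith)
  finally show ?thesis
    unfolding d_def .
qed

end
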